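(* Let $A_1,A_2,A_3$ be $m\times m$ complex positive semidefinite matrices, let $G$ be a subgroup of the symmetric group $S_m$, and let $\chi$ be an irreducible character of $G$. Then $$d^G_\chi(A_1+A_2+A_3)+d^G_\chi(A_1)+d^G_\chi(A_2)+d^G_\chi(A_3)-\big(d^G_\chi(A_1+A_2)+d^G_\chi(A_1+A_3)+d^G_\chi(A_2+A_3)\big)\;\ge\;0.$$
   Context: For a subgroup $G$ of $S_m$ and a character $\chi$ of $G$, the generalized matrix function on $m\times m$ matrices $X=(x_{ij})$ is $d^G_\chi(X)=\sum_{\sigma\in G}\chi(\sigma)\prod_{t=1}^m x_{t\,\sigma(t)}$. The inequality asserts that this (a priori complex) expression is a nonnegative real number. *)

theory Defs
  imports "Jordan_Normal_Form.Matrix" "Jordan_Normal_Form.Conjugate" "HOL-Combinatorics.Permutations"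
begin

text \<open>Indices run over {0..<m} instead of {1..m}.\<close>

definition psd_mat :: "nat \<Rightarrow> complex mat \<Rightarrow> bool" where
  "psd_mat m A \<longleftrightarrow> A \<in> carrier_mat m m
     \<and> (\<forall>i<m. \<forall>j<m. A $$ (i, j) = cnj (A $$ (j, i)))
     \<and> (\<forall>v \<in> carrier_vec m. 0 \<le> (\<Sum>i<m. \<Sum>j<m. cnj (v $ i) * A $$ (i, j) * v $ j))"

definition perm_subgroup :: "nat \<Rightarrow> (nat \<Rightarrow> nat) set \<Rightarrow> bool" where
  "perm_subgroup m G \<longleftrightarrow> (\<forall>\<sigma>\<in>G. \<sigma> permutes {..<m}) \<and> id \<in> G
     \<and> (\<forall>\<sigma>\<in>G. \<forall>\<tau>\<in>G. \<sigma> \<circ> \<tau> \<in> G) \<and> (\<forall>\<sigma>\<in>G. inv_into UNIV \<sigma> \<in> G)"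

definition mat_trace :: "complex mat \<Rightarrow> complex" where
  "mat_trace A = (\<Sum>i<dim_row A. A $$ (i, i))"

definition is_rep :: "(nat \<Rightarrow> nat) set \<Rightarrow> nat \<Rightarrow> ((nat \<Rightarrow> nat) \<Rightarrow> complex mat) \<Rightarrow> bool" where
  "is_rep G n \<rho> \<longleftrightarrow> (\<forall>\<sigma>\<in>G. \<rho> \<sigma> \<in> carrier_mat n n) \<and> \<rho> id = 1\<^sub>m n
     \<and> (\<forall>\<sigma>\<in>G. \<forall>\<tau>\<in>G. \<rho> (\<sigma> \<circ> \<tau>) = \<rho> \<sigma> * \<rho> \<tau>)"

definition is_subspace :: "nat \<Rightarrow> complex vec set \<Rightarrow> bool" where
  "is_subspace n W \<longleftrightarrow> W \<subseteq> carrier_vec n \<and> 0\<^sub>v n \<in> W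
     \<and> (\<forall>v\<in>W. \<forall>w\<in>W. v + w \<in> W) \<and> (\<forall>c. \<forall>v\<in>W. c \<cdot>\<^sub>v v \<in> W)"

definition irreducible_rep :: "(nat \<Rightarrow> nat) set \<Rightarrow> nat \<Rightarrow> ((nat \<Rightarrow> nat) \<Rightarrow> complex mat) \<Rightarrow> bool" where
  "irreducible_rep G n \<rho> \<longleftrightarrow> is_rep G n \<rho> \<and> n \<ge> 1
     \<and> (\<forall>W. is_subspace n W \<and> (\<forall>\<sigma>\<in>G. \<forall>v\<in>W. \<rho> \<sigma> *\<^sub>v v \<in> W)
            \<longrightarrow> W = {0\<^sub>v n} \<or> W = carrier_vec n)"

definition irreducible_character :: "(nat \<Rightarrow> nat) set \<Rightarrow> ((nat \<Rightarrow> nat) \<Rightarrow> complex) \<Rightarrow> bool" where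
  "irreducible_character G \<chi> \<longleftrightarrow>
     (\<exists>n \<rho>. irreducible_rep G n \<rho> \<and> (\<forall>\<sigma>\<in>G. \<chi> \<sigma> = mat_trace (\<rho> \<sigma>)))"

definition gen_mat_fun :: "nat \<Rightarrow> (nat \<Rightarrow> nat) set \<Rightarrow> ((nat \<Rightarrow> nat) \<Rightarrow> complex) \<Rightarrow> complex mat \<Rightarrow> complex" where
  "gen_mat_fun m G \<chi> X = (\<Sum>\<sigma>\<in>G. \<chi> \<sigma> * (\<Prod>t<m. X $$ (t, \<sigma> t)))"

end

theory Submission
  imports Defs "Jordan_Normal_Form.Determinant"
begin

text \<open>Expanding each generalized matrix function multilinearly turns the left-hand side into a
  sum over colourings \<open>w\<close> of the rows by the three matrices. By inclusion--exclusion a colouring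
  carries weight 1 if it uses all three colours (or \<open>m = 0\<close>) and 0 otherwise, and this weight is
  invariant under \<open>w \<mapsto> w \<circ> \<pi>\<close> for \<open>\<pi> \<in> G\<close>. Writing each \<open>A\<^sub>i\<close> as a Gram matrix \<open>F\<^sub>i\<^sup>* F\<^sub>i\<close> and
  averaging over \<open>G\<close>, the contribution of each colouring becomes a sum of terms
  \<open>\<Sum>\<^sub>\<pi>\<^sub>,\<^sub>\<sigma> \<chi>(\<sigma>) \<beta>(\<pi>)\<^sup>* \<beta>(\<sigma> \<pi>)\<close>, which are nonnegative because a character is a positive
  definite function on \<open>G\<close>: the representation is unitary for the invariant form
  \<open>H = \<Sum>\<^sub>g \<rho>(g)\<^sup>* \<rho>(g)\<close>.\<close>

section \<open>Hermitian forms and Gram factorisation\<close>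

definition hform :: "nat \<Rightarrow> (nat \<Rightarrow> nat \<Rightarrow> complex) \<Rightarrow> (nat \<Rightarrow> complex) \<Rightarrow> complex" where
  "hform n A v = (\<Sum>i<n. \<Sum>j<n. cnj (v i) * A i j * v j)"

definition psd_fun :: "nat \<Rightarrow> (nat \<Rightarrow> nat \<Rightarrow> complex) \<Rightarrow> bool" where
  "psd_fun n A \<longleftrightarrow> (\<forall>i<n. \<forall>j<n. A i j = cnj (A j i)) \<and> (\<forall>v. 0 \<le> hform n A v)"

lemma hform_cong: "(\<And>i. i < n \<Longrightarrow> v i = w i) \<Longrightarrow> hform n A v = hform n A w"
  unfolding hform_def by (intro sum.cong refl) auto

lemma hform_Suc:
  "hform (Suc n) A v = hform n A v + (\<Sum>j<n. cnj (v n) * A n j * v j) + (\<Sum>i<n. cnj (v i) * A i n * v n)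
      + cnj (v n) * A n n * v n"
  unfolding hform_def by (simp add: sum.distrib algebra_simps)

lemma sum_two_point:
  fixes f :: "nat \<Rightarrow> 'a::comm_ring_1"
  assumes "i \<noteq> k" "i < n" "k < n"
  shows "(\<Sum>j<n. f j * (if j = i then x else if j = k then y else 0)) = f i * x + f k * y"
proof -
  have "(\<Sum>j<n. f j * (if j = i then x else if j = k then y else 0))
      = (\<Sum>j<n. (if j = i then f j * x else 0) + (if j = k then f j * y else 0))"
    by (rule sum.cong) (use assms in auto)
  then show ?thesis using assms by (simp add: sum.distrib)
qed

lemma hform_two_point:
  assumes "i \<noteq> k" "i < n" "k < n"
  shows "hform n A (\<lambda>j. if j = i then x else if j = k then y else 0) =
    cnj x * A i i * x + cnj x * A i k * y + cnj y * A k i * x + cnj y * A k k * y"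
proof -
  let ?v = "\<lambda>j. if j = i then x else if j = k then y else 0"
  have "hform n A ?v = (\<Sum>a<n. (\<Sum>j<n. A a j * ?v j) * (if a = i then cnj x else if a = k then cnj y else 0))"
    unfolding hform_def by (intro sum.cong refl) (auto simp: sum_distrib_left sum_distrib_right mult_ac)
  also have "\<dots> = (\<Sum>a<n. (A a i * x + A a k * y) * (if a = i then cnj x else if a = k then cnj y else 0))"
    unfolding sum_two_point[OF assms] ..
  also have "\<dots> = cnj x * A i i * x + cnj x * A i k * y + cnj y * A k i * x + cnj y * A k k * y"
    by (subst sum_two_point[OF assms]) (simp add: algebra_simps)
  finally show ?thesis .
qed

lemma psd_fun_col_zero_if_diag_zero:
  assumes psd: "psd_fun n A" and "i < n" "k < n" and diag: "A k k = 0"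
  shows "A i k = 0"
proof (rule ccontr)
  assume nz: "A i k \<noteq> 0"
  then have "i \<noteq> k" using diag by auto
  define a where "a = A i k"
  have "A k i = cnj a" using psd assms unfolding psd_fun_def a_def by blast
  define r where "r = (cmod a)\<^sup>2"
  have r: "a * cnj a = complex_of_real r" "0 < r"
    unfolding r_def using nz a_def by (simp_all only: complex_norm_square) simp
  \<comment> \<open>the test vector \<open>e\<^sub>i + y e\<^sub>k\<close> with \<open>y\<close> chosen so that the form equals \<open>-1\<close>\<close>
  define t where "t = (Re (A i i) + 1) / (2 * r)"
  define y where "y = - complex_of_real t * cnj a"
  have "0 \<le> hform n A (\<lambda>j. if j = i then 1 else if j = k then y else 0)"
    using psd unfolding psd_fun_def by blast
  also have "\<dots> = A i i - complex_of_real (2 * t * r)"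
    using hform_two_point[OF \<open>i \<noteq> k\<close> assms(2,3), of A 1 y] diag \<open>A k i = cnj a\<close> r(1)
    unfolding y_def a_def by (simp add: algebra_simps)
  finally have "0 \<le> Re (A i i) - 2 * t * r" by (simp add: less_eq_complex_def)
  also have "Re (A i i) - 2 * t * r = -1" unfolding t_def using r(2) by (simp add: field_simps)
  finally show False by simp
qed

lemma hform_diff_rank_one:
  "hform n (\<lambda>i j. A i j - cnj (g i) * g j) v = hform n A v - cnj (\<Sum>j<n. g j * v j) * (\<Sum>j<n. g j * v j)"
proof -
  have "hform n (\<lambda>i j. A i j - cnj (g i) * g j) v = hform n A v - (\<Sum>i<n. \<Sum>j<n. cnj (g i * v i) * (g j * v j))"
    unfolding hform_def by (simp add: sum_subtractf algebra_simps)
  then show ?thesis by (simp add: sum_product)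
qed

lemma psd_fun_peel_last:
  assumes psd: "psd_fun (Suc n) A"
  obtains g where "psd_fun n (\<lambda>i j. A i j - cnj (g i) * g j)"
    and "\<And>i. i < Suc n \<Longrightarrow> A i n = cnj (g i) * g n"
    and "\<And>j. j < Suc n \<Longrightarrow> A n j = cnj (g n) * g j"
proof -
  have herm: "\<And>i j. i < Suc n \<Longrightarrow> j < Suc n \<Longrightarrow> A i j = cnj (A j i)"
    and nonneg: "\<And>v. 0 \<le> hform (Suc n) A v" using psd unfolding psd_fun_def by blast+
  have "0 \<le> hform (Suc n) A (\<lambda>j. if j = n then 1 else 0)" by (rule nonneg)
  then have "0 \<le> A n n" unfolding hform_Suc by (simp add: hform_def)
  then have "A n n = complex_of_real (Re (A n n))" "0 \<le> Re (A n n)"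
    by (simp_all add: less_eq_complex_def complex_eq_iff)
  then obtain d where d: "A n n = complex_of_real d" "0 \<le> d" by blast
  define s where "s = complex_of_real (sqrt d)"
  \<comment> \<open>if \<open>A n n = 0\<close> then \<open>s = 0\<close> and \<open>g = 0\<close>, because \<open>x / 0 = 0\<close>\<close>
  define g where "g j = A n j / s" for j
  have ss: "s * s = A n n" using d unfolding s_def by (simp flip: of_real_mult)
  have col: "A i n = cnj (g i) * g n" if i: "i < Suc n" for i
  proof (cases "A n n = 0")
    case True
    then have "s = 0" using ss by simp
    then show ?thesis using psd_fun_col_zero_if_diag_zero[OF psd i _ True] by (simp add: g_def)
  next
    case False
    then have "s \<noteq> 0" using ss by auto
    have "g n = s" unfolding g_def using \<open>s \<noteq> 0\<close> by (simp flip: ss)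
    moreover have "cnj (g i) = A i n / s"
      unfolding g_def s_def using herm[OF i, of n] by simp
    ultimately show ?thesis using \<open>s \<noteq> 0\<close> by simp
  qed
  have row: "A n j = cnj (g n) * g j" if "j < Suc n" for j
    using herm[OF _ that, of n] col[OF that] by simp
  have "psd_fun n (\<lambda>i j. A i j - cnj (g i) * g j)" unfolding psd_fun_def
  proof (intro conjI allI impI)
    fix i j assume "i < n" "j < n"
    then show "A i j - cnj (g i) * g j = cnj (A j i - cnj (g j) * g i)" using herm[of i j] by simp
  next
    fix v
    \<comment> \<open>extend \<open>v\<close> by the coordinate that makes it orthogonal to \<open>g\<close>\<close>
    define v' where "v' = v(n := - (\<Sum>j<n. A n j * v j) / A n n)"
    have orth: "(\<Sum>j<Suc n. g j * v' j) = 0"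
    proof -
      have "(\<Sum>j<Suc n. g j * v' j) = ((\<Sum>j<n. A n j * v j) + A n n * v' n) / s"
        unfolding g_def v'_def by (simp add: sum_divide_distrib diff_divide_distrib)
      also have "\<dots> = 0" unfolding v'_def using ss by (cases "A n n = 0") auto
      finally show ?thesis .
    qed
    have "0 \<le> hform (Suc n) A v'" by (rule nonneg)
    also have "\<dots> = hform (Suc n) (\<lambda>i j. A i j - cnj (g i) * g j) v'"
      unfolding hform_diff_rank_one orth by simp
    also have "\<dots> = hform n (\<lambda>i j. A i j - cnj (g i) * g j) v'"
      unfolding hform_Suc using col row by simp
    also have "\<dots> = hform n (\<lambda>i j. A i j - cnj (g i) * g j) v"
      by (rule hform_cong) (simp add: v'_def)
    finally show "0 \<le> hform n (\<lambda>i j. A i j - cnj (g i) * g j) v" .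
  qed
  then show thesis using that col row by blast
qed

lemma psd_fun_gram:
  "psd_fun n A \<Longrightarrow> \<exists>F. \<forall>i<n. \<forall>j<n. A i j = (\<Sum>k<n. cnj (F k i) * F k j)"
proof (induction n arbitrary: A)
  case 0
  then show ?case by simp
next
  case (Suc n)
  obtain g where psd': "psd_fun n (\<lambda>i j. A i j - cnj (g i) * g j)"
    and col: "\<And>i. i < Suc n \<Longrightarrow> A i n = cnj (g i) * g n"
    and row: "\<And>j. j < Suc n \<Longrightarrow> A n j = cnj (g n) * g j"
    using psd_fun_peel_last[OF Suc.prems] by blast
  obtain F where F: "\<forall>i<n. \<forall>j<n. A i j - cnj (g i) * g j = (\<Sum>k<n. cnj (F k i) * F k j)"
    using Suc.IH[OF psd'] by blast
  define F' where "F' k j = (if k < n then if j < n then F k j else 0 else g j)" for k j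
  have "A i j = (\<Sum>k<Suc n. cnj (F' k i) * F' k j)" if i: "i < Suc n" and j: "j < Suc n" for i j
  proof -
    have "(\<Sum>k<n. cnj (F' k i) * F' k j) = A i j - cnj (g i) * g j"
    proof (cases "i < n \<and> j < n")
      case True
      then show ?thesis using F unfolding F'_def by simp
    next
      case False
      then have "i = n \<or> j = n" using i j by auto
      then show ?thesis using row[OF j] col[OF i] unfolding F'_def by auto
    qed
    then show ?thesis unfolding F'_def by simp
  qed
  then show ?case by blast
qed

lemma psd_mat_gram:
  assumes "psd_mat m A"
  shows "\<exists>F. \<forall>i<m. \<forall>j<m. A $$ (i, j) = (\<Sum>k<m. cnj (F k i) * F k j)"
proof -
  have "psd_fun m (\<lambda>i j. A $$ (i, j))" unfolding psd_fun_def
  proof (intro conjI allI impI)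
    fix i j assume "i < m" "j < m"
    then show "A $$ (i, j) = cnj (A $$ (j, i))" using assms unfolding psd_mat_def by blast
  next
    fix v :: "nat \<Rightarrow> complex"
    have "0 \<le> (\<Sum>i<m. \<Sum>j<m. cnj (vec m v $ i) * A $$ (i, j) * vec m v $ j)"
      using assms unfolding psd_mat_def by (meson vec_carrier)
    also have "\<dots> = hform m (\<lambda>i j. A $$ (i, j)) v" unfolding hform_def by (intro sum.cong refl) simp
    finally show "0 \<le> hform m (\<lambda>i j. A $$ (i, j)) v" .
  qed
  then show ?thesis by (rule psd_fun_gram)
qed

section \<open>Permutation groups and their representations\<close>

text \<open>Plain \<open>inv\<close> is taken by the group-inverse syntax of HOL-Algebra.\<close>
abbreviation perm_inv :: "(nat \<Rightarrow> nat) \<Rightarrow> nat \<Rightarrow> nat" where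
  "perm_inv \<sigma> \<equiv> inv_into UNIV \<sigma>"

lemma perm_subgroupD:
  assumes "perm_subgroup m G"
  shows perm_subgroup_finite: "finite G"
    and perm_subgroup_permutes: "\<sigma> \<in> G \<Longrightarrow> \<sigma> permutes {..<m}"
    and perm_subgroup_id: "id \<in> G"
    and perm_subgroup_comp: "\<sigma> \<in> G \<Longrightarrow> \<tau> \<in> G \<Longrightarrow> \<sigma> \<circ> \<tau> \<in> G"
    and perm_subgroup_inv: "\<sigma> \<in> G \<Longrightarrow> perm_inv \<sigma> \<in> G"
proof -
  have "G \<subseteq> {p. p permutes {..<m}}" using assms unfolding perm_subgroup_def by auto
  then show "finite G" by (rule finite_subset) (simp add: finite_permutations)
qed (use assms in \<open>auto simp: perm_subgroup_def\<close>)

lemma sum_perm_subgroup_comp_right: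
  assumes G: "perm_subgroup m G" and \<pi>: "\<pi> \<in> G"
  shows "(\<Sum>g\<in>G. f (g \<circ> \<pi>)) = (\<Sum>g\<in>G. f g)"
proof (rule sum.reindex_bij_witness[where i = "\<lambda>g. g \<circ> perm_inv \<pi>" and j = "\<lambda>g. g \<circ> \<pi>"])
  have p: "\<pi> permutes {..<m}" by (rule perm_subgroup_permutes[OF G \<pi>])
  fix g assume g: "g \<in> G"
  show "g \<circ> \<pi> \<circ> perm_inv \<pi> = g" "g \<circ> perm_inv \<pi> \<circ> \<pi> = g"
    using permutes_inv_o[OF p] by (simp_all add: comp_assoc)
  show "g \<circ> \<pi> \<in> G" "g \<circ> perm_inv \<pi> \<in> G"
    using G g \<pi> by (simp_all add: perm_subgroup_comp perm_subgroup_inv)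
qed simp

lemma sum_rotate3: "(\<Sum>a\<in>A. \<Sum>b\<in>B. \<Sum>c\<in>C. f a b c) = (\<Sum>b\<in>B. \<Sum>c\<in>C. \<Sum>a\<in>A. f a b c)"
  by (subst sum.swap) (intro sum.cong refl sum.swap)

lemma sum_swap_pairs:
  "(\<Sum>a\<in>A. \<Sum>b\<in>B. \<Sum>c\<in>C. \<Sum>d\<in>D. f a b c d) = (\<Sum>c\<in>C. \<Sum>d\<in>D. \<Sum>a\<in>A. \<Sum>b\<in>B. f a b c d)"
proof -
  have "(\<Sum>a\<in>A. \<Sum>b\<in>B. \<Sum>c\<in>C. \<Sum>d\<in>D. f a b c d) = (\<Sum>a\<in>A. \<Sum>c\<in>C. \<Sum>d\<in>D. \<Sum>b\<in>B. f a b c d)"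
    by (intro sum.cong refl) (subst sum.swap, intro sum.cong refl sum.swap)
  also have "\<dots> = (\<Sum>c\<in>C. \<Sum>d\<in>D. \<Sum>a\<in>A. \<Sum>b\<in>B. f a b c d)"
    by (subst sum.swap, intro sum.cong refl sum.swap)
  finally show ?thesis .
qed

lemma is_rep_carrier: "is_rep G n \<rho> \<Longrightarrow> \<sigma> \<in> G \<Longrightarrow> \<rho> \<sigma> \<in> carrier_mat n n"
  unfolding is_rep_def by auto

lemma is_rep_comp_entry:
  assumes \<rho>: "is_rep G n \<rho>" and "\<sigma> \<in> G" "\<tau> \<in> G" "i < n" "j < n"
  shows "\<rho> (\<sigma> \<circ> \<tau>) $$ (i, j) = (\<Sum>k<n. \<rho> \<sigma> $$ (i, k) * \<rho> \<tau> $$ (k, j))"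
proof -
  have "\<rho> (\<sigma> \<circ> \<tau>) = \<rho> \<sigma> * \<rho> \<tau>" using assms unfolding is_rep_def by auto
  with assms is_rep_carrier[OF \<rho> \<open>\<sigma> \<in> G\<close>] is_rep_carrier[OF \<rho> \<open>\<tau> \<in> G\<close>] show ?thesis
    by (auto simp: scalar_prod_def atLeast0LessThan intro!: sum.cong)
qed

lemma is_rep_id_entry:
  assumes "is_rep G n \<rho>" "i < n" "j < n"
  shows "\<rho> id $$ (i, j) = (if i = j then 1 else 0)"
  using assms unfolding is_rep_def by auto

text \<open>A positive definite form for which every \<open>\<rho>(\<pi>)\<close> is unitary.\<close>
definition rep_inv_form :: "(nat \<Rightarrow> nat) set \<Rightarrow> nat \<Rightarrow> ((nat \<Rightarrow> nat) \<Rightarrow> complex mat) \<Rightarrow> nat \<Rightarrow> nat \<Rightarrow> complex" where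
  "rep_inv_form G n \<rho> a b = (\<Sum>g\<in>G. \<Sum>k<n. cnj (\<rho> g $$ (k, a)) * \<rho> g $$ (k, b))"

lemma cnj_rep_inv_form: "cnj (rep_inv_form G n \<rho> a b) = rep_inv_form G n \<rho> b a"
  unfolding rep_inv_form_def by (simp add: mult.commute)

lemma rep_inv_form_invariant:
  assumes G: "perm_subgroup m G" and \<rho>: "is_rep G n \<rho>" and \<pi>: "\<pi> \<in> G" and "i < n" "j < n"
  shows "(\<Sum>a<n. \<Sum>b<n. cnj (\<rho> \<pi> $$ (a, i)) * rep_inv_form G n \<rho> a b * \<rho> \<pi> $$ (b, j))
    = rep_inv_form G n \<rho> i j"
proof -
  have "(\<Sum>a<n. \<Sum>b<n. cnj (\<rho> \<pi> $$ (a, i)) * rep_inv_form G n \<rho> a b * \<rho> \<pi> $$ (b, j))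
    = (\<Sum>g\<in>G. \<Sum>k<n. cnj (\<Sum>a<n. \<rho> g $$ (k, a) * \<rho> \<pi> $$ (a, i)) * (\<Sum>b<n. \<rho> g $$ (k, b) * \<rho> \<pi> $$ (b, j)))"
    unfolding rep_inv_form_def
    by (simp add: sum_distrib_left sum_distrib_right sum_product mult_ac) (rule sum_swap_pairs)
  also have "\<dots> = (\<Sum>g\<in>G. \<Sum>k<n. cnj (\<rho> (g \<circ> \<pi>) $$ (k, i)) * \<rho> (g \<circ> \<pi>) $$ (k, j))"
    using assms by (intro sum.cong refl) (simp add: is_rep_comp_entry)
  also have "\<dots> = rep_inv_form G n \<rho> i j"
    unfolding rep_inv_form_def by (rule sum_perm_subgroup_comp_right[OF G \<pi>])
  finally show ?thesis .
qed

lemma hform_rep_inv_form: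
  "hform n (rep_inv_form G n \<rho>) v
    = (\<Sum>g\<in>G. \<Sum>k<n. cnj (\<Sum>j<n. \<rho> g $$ (k, j) * v j) * (\<Sum>j<n. \<rho> g $$ (k, j) * v j))"
  unfolding hform_def rep_inv_form_def
  by (simp add: sum_distrib_left sum_distrib_right sum_product mult_ac) (rule sum_swap_pairs)

lemma cnj_mult_self_nonneg: "0 \<le> cnj z * (z :: complex)"
  by (simp add: less_eq_complex_def)

lemma hform_rep_inv_form_ge:
  assumes G: "perm_subgroup m G" and \<rho>: "is_rep G n \<rho>"
  shows "(\<Sum>k<n. cnj (v k) * v k) \<le> hform n (rep_inv_form G n \<rho>) v"
proof -
  have "(\<Sum>j<n. \<rho> id $$ (k, j) * v j) = v k" if "k < n" for k
  proof -
    have "(\<Sum>j<n. \<rho> id $$ (k, j) * v j) = (\<Sum>j<n. if k = j then v j else 0)"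
      by (rule sum.cong) (auto simp: is_rep_id_entry[OF \<rho> that])
    then show ?thesis using that by simp
  qed
  then have "(\<Sum>k<n. cnj (v k) * v k)
      = (\<Sum>k<n. cnj (\<Sum>j<n. \<rho> id $$ (k, j) * v j) * (\<Sum>j<n. \<rho> id $$ (k, j) * v j))"
    by simp
  also have "\<dots> \<le> hform n (rep_inv_form G n \<rho>) v"
    unfolding hform_rep_inv_form
    by (rule member_le_sum[OF perm_subgroup_id[OF G] _ perm_subgroup_finite[OF G]])
      (intro sum_nonneg cnj_mult_self_nonneg)
  finally show ?thesis .
qed

section \<open>Characters are positive definite\<close>

lemma hform_coercive_invertible:
  assumes coercive: "\<And>v. (\<Sum>k<n. cnj (v k) * v k) \<le> hform n H v"
  obtains K where "\<And>a c. a < n \<Longrightarrow> c < n \<Longrightarrow> (\<Sum>b<n. K a b * H b c) = (if a = c then 1 else 0)"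
    and "\<And>a c. a < n \<Longrightarrow> c < n \<Longrightarrow> (\<Sum>b<n. H a b * K b c) = (if a = c then 1 else 0)"
proof -
  define Hm where "Hm = mat n n (\<lambda>(a, b). H a b)"
  have Hm: "Hm \<in> carrier_mat n n" unfolding Hm_def by simp
  have "det Hm \<noteq> 0"
  proof
    assume "det Hm = 0"
    then obtain v where v: "v \<in> carrier_vec n" "v \<noteq> 0\<^sub>v n" and "Hm *\<^sub>v v = 0\<^sub>v n"
      using det_0_iff_vec_prod_zero_field[OF Hm] by auto
    then have Hv: "(\<Sum>j<n. H i j * v $ j) = 0" if "i < n" for i
      using that v unfolding Hm_def
      by (auto simp: scalar_prod_def atLeast0LessThan dest!: arg_cong[where f = "\<lambda>u. u $ i"])
    have "(\<Sum>k<n. cnj (v $ k) * v $ k) \<le> hform n H (\<lambda>i. v $ i)" by (rule coercive)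
    also have "\<dots> = (\<Sum>i<n. cnj (v $ i) * (\<Sum>j<n. H i j * v $ j))"
      unfolding hform_def by (simp add: sum_distrib_left mult.assoc)
    also have "\<dots> = 0" using Hv by simp
    finally have "(\<Sum>k<n. cnj (v $ k) * v $ k) \<le> 0" .
    moreover have "0 \<le> (\<Sum>k<n. cnj (v $ k) * v $ k)" by (intro sum_nonneg cnj_mult_self_nonneg)
    ultimately have "(\<Sum>k<n. cnj (v $ k) * v $ k) = 0" by (rule antisym)
    then have "\<forall>k<n. cnj (v $ k) * v $ k = 0"
      by (subst (asm) sum_nonneg_eq_0_iff) (auto intro: cnj_mult_self_nonneg)
    then have "v = 0\<^sub>v n" using v by (intro eq_vecI) auto
    with v show False by simp
  qed
  then obtain Km where Km: "Km \<in> carrier_mat n n" "Km * Hm = 1\<^sub>m n" "Hm * Km = 1\<^sub>m n"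
    using det_non_zero_imp_unit[OF Hm] unfolding Units_def ring_mat_def by auto
  have "(\<Sum>b<n. Km $$ (a, b) * H b c) = (if a = c then 1 else 0)"
    and "(\<Sum>b<n. H a b * Km $$ (b, c)) = (if a = c then 1 else 0)" if "a < n" "c < n" for a c
  proof -
    have "(Km * Hm) $$ (a, c) = (\<Sum>b<n. Km $$ (a, b) * H b c)"
      and "(Hm * Km) $$ (a, c) = (\<Sum>b<n. H a b * Km $$ (b, c))"
      using that Km(1) Hm unfolding Hm_def by (auto simp: scalar_prod_def atLeast0LessThan intro!: sum.cong)
    then show "(\<Sum>b<n. Km $$ (a, b) * H b c) = (if a = c then 1 else 0)"
      and "(\<Sum>b<n. H a b * Km $$ (b, c)) = (if a = c then 1 else 0)"
      using that Km(2,3) by simp_all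
  qed
  then show thesis using that[of "\<lambda>a b. Km $$ (a, b)"] by blast
qed

text \<open>If \<open>H K = 1\<close>, then \<open>z\<^sup>* K z = w\<^sup>* H w\<close> for \<open>w = K z\<close>.\<close>
lemma hform_right_inverse_nonneg:
  assumes H: "psd_fun n H"
    and HK: "\<And>a c. a < n \<Longrightarrow> c < n \<Longrightarrow> (\<Sum>b<n. H a b * K b c) = (if a = c then 1 else 0)"
  shows "0 \<le> hform n K z"
proof -
  define w where "w a = (\<Sum>i<n. K a i * z i)" for a
  have z: "z l = (\<Sum>b<n. H l b * w b)" if l: "l < n" for l
  proof -
    have "(\<Sum>b<n. H l b * w b) = (\<Sum>i<n. (\<Sum>b<n. H l b * K b i) * z i)"
      unfolding w_def sum_distrib_right sum_distrib_left by (subst sum.swap) (simp add: mult.assoc)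
    also have "\<dots> = (\<Sum>i<n. if l = i then z i else 0)" by (intro sum.cong refl) (simp add: HK l)
    also have "\<dots> = z l" using l by simp
    finally show ?thesis by simp
  qed
  have herm: "cnj (H l b) = H b l" if "l < n" "b < n" for l b
    using H that unfolding psd_fun_def by (metis complex_cnj_cnj)
  have "hform n K z = (\<Sum>l<n. cnj (z l) * w l)"
    unfolding hform_def w_def by (simp add: sum_distrib_left mult.assoc)
  also have "\<dots> = (\<Sum>l<n. \<Sum>b<n. cnj (w b) * H b l * w l)"
    by (intro sum.cong refl) (simp add: z herm sum_distrib_left sum_distrib_right mult_ac)
  also have "\<dots> = hform n H w" unfolding hform_def by (rule sum.swap)
  also have "0 \<le> \<dots>" using H unfolding psd_fun_def by blast
  finally show ?thesis by simp
qed

lemma psd_fun_rep_inv_form: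
  assumes "perm_subgroup m G" "is_rep G n \<rho>"
  shows "psd_fun n (rep_inv_form G n \<rho>)"
  unfolding psd_fun_def
proof (intro conjI allI impI)
  fix i j show "rep_inv_form G n \<rho> i j = cnj (rep_inv_form G n \<rho> j i)"
    by (simp add: cnj_rep_inv_form)
next
  fix v
  have "0 \<le> (\<Sum>k<n. cnj (v k) * v k)" by (intro sum_nonneg cnj_mult_self_nonneg)
  also have "\<dots> \<le> hform n (rep_inv_form G n \<rho>) v" by (rule hform_rep_inv_form_ge[OF assms])
  finally show "0 \<le> hform n (rep_inv_form G n \<rho>) v" .
qed

text \<open>Unitarity with respect to \<open>H\<close>: \<open>\<rho>(\<pi>\<inverse>) = H\<inverse> \<rho>(\<pi>)\<^sup>* H\<close>.\<close>
lemma rep_perm_inv_entry: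
  assumes G: "perm_subgroup m G" and \<rho>: "is_rep G n \<rho>" and \<pi>: "\<pi> \<in> G"
    and KH: "\<And>a c. a < n \<Longrightarrow> c < n \<Longrightarrow> (\<Sum>b<n. K a b * rep_inv_form G n \<rho> b c) = (if a = c then 1 else 0)"
    and c: "c < n" and l: "l < n"
  shows "\<rho> (perm_inv \<pi>) $$ (c, l) = (\<Sum>i<n. K c i * (\<Sum>a<n. cnj (\<rho> \<pi> $$ (a, i)) * rep_inv_form G n \<rho> a l))"
proof -
  let ?H = "rep_inv_form G n \<rho>" and ?\<pi>' = "perm_inv \<pi>"
  have \<pi>': "?\<pi>' \<in> G" by (rule perm_subgroup_inv[OF G \<pi>])
  have delta: "(\<Sum>j<n. \<rho> \<pi> $$ (b, j) * \<rho> ?\<pi>' $$ (j, l)) = (if b = l then 1 else 0)" if b: "b < n" for b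
  proof -
    have "(\<Sum>j<n. \<rho> \<pi> $$ (b, j) * \<rho> ?\<pi>' $$ (j, l)) = \<rho> (\<pi> \<circ> ?\<pi>') $$ (b, l)"
      by (rule is_rep_comp_entry[OF \<rho> \<pi> \<pi>' b l, symmetric])
    also have "\<pi> \<circ> ?\<pi>' = id" by (rule permutes_inv_o(1)[OF perm_subgroup_permutes[OF G \<pi>]])
    also have "\<rho> id $$ (b, l) = (if b = l then 1 else 0)" by (rule is_rep_id_entry[OF \<rho> b l])
    finally show ?thesis .
  qed
  have H\<rho>': "(\<Sum>j<n. ?H i j * \<rho> ?\<pi>' $$ (j, l)) = (\<Sum>a<n. cnj (\<rho> \<pi> $$ (a, i)) * ?H a l)"
    if i: "i < n" for i
  proof -
    have "(\<Sum>j<n. ?H i j * \<rho> ?\<pi>' $$ (j, l))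
       = (\<Sum>j<n. \<Sum>a<n. \<Sum>b<n. cnj (\<rho> \<pi> $$ (a, i)) * ?H a b * (\<rho> \<pi> $$ (b, j) * \<rho> ?\<pi>' $$ (j, l)))"
      by (simp add: rep_inv_form_invariant[OF G \<rho> \<pi> i, symmetric] sum_distrib_right mult.assoc)
    also have "\<dots> = (\<Sum>a<n. \<Sum>b<n. cnj (\<rho> \<pi> $$ (a, i)) * ?H a b * (\<Sum>j<n. \<rho> \<pi> $$ (b, j) * \<rho> ?\<pi>' $$ (j, l)))"
      unfolding sum_distrib_left by (rule sum_rotate3)
    also have "\<dots> = (\<Sum>a<n. cnj (\<rho> \<pi> $$ (a, i)) * ?H a l)"
      using l by (simp add: delta if_distrib cong: if_cong)
    finally show ?thesis .
  qed
  have "\<rho> ?\<pi>' $$ (c, l) = (\<Sum>j<n. if c = j then \<rho> ?\<pi>' $$ (j, l) else 0)"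
    using c by simp
  also have "\<dots> = (\<Sum>j<n. (\<Sum>i<n. K c i * ?H i j) * \<rho> ?\<pi>' $$ (j, l))"
    by (intro sum.cong refl) (simp add: KH c)
  also have "\<dots> = (\<Sum>i<n. K c i * (\<Sum>j<n. ?H i j * \<rho> ?\<pi>' $$ (j, l)))"
    unfolding sum_distrib_left sum_distrib_right mult.assoc by (rule sum.swap)
  also have "\<dots> = (\<Sum>i<n. K c i * (\<Sum>a<n. cnj (\<rho> \<pi> $$ (a, i)) * ?H a l))"
    by (simp add: H\<rho>')
  finally show ?thesis .
qed

lemma trace_rep_comp_perm_inv:
  assumes G: "perm_subgroup m G" and \<rho>: "is_rep G n \<rho>" and \<pi>: "\<pi> \<in> G" and \<tau>: "\<tau> \<in> G"
    and KH: "\<And>a c. a < n \<Longrightarrow> c < n \<Longrightarrow> (\<Sum>b<n. K a b * rep_inv_form G n \<rho> b c) = (if a = c then 1 else 0)"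
  shows "mat_trace (\<rho> (\<tau> \<circ> perm_inv \<pi>))
    = (\<Sum>g\<in>G. \<Sum>k<n. \<Sum>l<n. \<Sum>i<n. \<rho> (g \<circ> \<tau>) $$ (k, l) * K l i * cnj (\<rho> (g \<circ> \<pi>) $$ (k, i)))"
proof -
  let ?H = "rep_inv_form G n \<rho>"
  have \<pi>': "perm_inv \<pi> \<in> G" by (rule perm_subgroup_inv[OF G \<pi>])
  have "mat_trace (\<rho> (\<tau> \<circ> perm_inv \<pi>)) = (\<Sum>c<n. \<Sum>l<n. \<rho> \<tau> $$ (c, l) * \<rho> (perm_inv \<pi>) $$ (l, c))"
    unfolding mat_trace_def using is_rep_carrier[OF \<rho> perm_subgroup_comp[OF G \<tau> \<pi>']]
    by (simp add: is_rep_comp_entry[OF \<rho> \<tau> \<pi>'])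
  also have "\<dots> = (\<Sum>c<n. \<Sum>l<n. \<Sum>i<n. \<rho> \<tau> $$ (c, l) * K l i * (\<Sum>a<n. cnj (\<rho> \<pi> $$ (a, i)) * ?H a c))"
    by (simp add: rep_perm_inv_entry[OF G \<rho> \<pi> KH] sum_distrib_left mult.assoc)
  also have "\<dots> = (\<Sum>l<n. \<Sum>i<n. \<Sum>c<n. \<rho> \<tau> $$ (c, l) * K l i * (\<Sum>a<n. cnj (\<rho> \<pi> $$ (a, i)) * ?H a c))"
    by (rule sum_rotate3)
  also have "\<dots> = (\<Sum>l<n. \<Sum>i<n. \<Sum>g\<in>G. \<Sum>k<n.
      (\<Sum>c<n. \<rho> g $$ (k, c) * \<rho> \<tau> $$ (c, l)) * K l i * cnj (\<Sum>a<n. \<rho> g $$ (k, a) * \<rho> \<pi> $$ (a, i)))"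
    unfolding rep_inv_form_def
    by (intro sum.cong refl) (simp add: sum_distrib_left sum_distrib_right mult_ac, rule sum_swap_pairs)
  also have "\<dots> = (\<Sum>g\<in>G. \<Sum>k<n. \<Sum>l<n. \<Sum>i<n.
      (\<Sum>c<n. \<rho> g $$ (k, c) * \<rho> \<tau> $$ (c, l)) * K l i * cnj (\<Sum>a<n. \<rho> g $$ (k, a) * \<rho> \<pi> $$ (a, i)))"
    by (rule sum_swap_pairs)
  also have "\<dots> = (\<Sum>g\<in>G. \<Sum>k<n. \<Sum>l<n. \<Sum>i<n. \<rho> (g \<circ> \<tau>) $$ (k, l) * K l i * cnj (\<rho> (g \<circ> \<pi>) $$ (k, i)))"
    by (intro sum.cong refl) (simp add: is_rep_comp_entry[OF \<rho> _ \<tau>] is_rep_comp_entry[OF \<rho> _ \<pi>])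
  finally show ?thesis .
qed

lemma character_positive_definite:
  assumes G: "perm_subgroup m G" and \<rho>: "is_rep G n \<rho>" and \<chi>: "\<forall>\<sigma>\<in>G. \<chi> \<sigma> = mat_trace (\<rho> \<sigma>)"
  shows "0 \<le> (\<Sum>\<pi>\<in>G. \<Sum>\<tau>\<in>G. cnj (\<alpha> \<pi>) * \<alpha> \<tau> * \<chi> (\<tau> \<circ> perm_inv \<pi>))"
proof -
  obtain K where KH: "\<And>a c. a < n \<Longrightarrow> c < n \<Longrightarrow> (\<Sum>b<n. K a b * rep_inv_form G n \<rho> b c) = (if a = c then 1 else 0)"
    and HK: "\<And>a c. a < n \<Longrightarrow> c < n \<Longrightarrow> (\<Sum>b<n. rep_inv_form G n \<rho> a b * K b c) = (if a = c then 1 else 0)"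
    using hform_coercive_invertible[OF hform_rep_inv_form_ge[OF G \<rho>]] by blast
  have "(\<Sum>\<pi>\<in>G. \<Sum>\<tau>\<in>G. cnj (\<alpha> \<pi>) * \<alpha> \<tau> * \<chi> (\<tau> \<circ> perm_inv \<pi>))
    = (\<Sum>\<pi>\<in>G. \<Sum>\<tau>\<in>G. cnj (\<alpha> \<pi>) * \<alpha> \<tau> *
         (\<Sum>g\<in>G. \<Sum>k<n. \<Sum>l<n. \<Sum>i<n. \<rho> (g \<circ> \<tau>) $$ (k, l) * K l i * cnj (\<rho> (g \<circ> \<pi>) $$ (k, i))))"
    using \<chi> by (intro sum.cong refl)
      (simp add: perm_subgroup_comp[OF G] perm_subgroup_inv[OF G] trace_rep_comp_perm_inv[OF G \<rho> _ _ KH])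
  also have "\<dots> = (\<Sum>g\<in>G. \<Sum>k<n. hform n K (\<lambda>i. cnj (\<Sum>\<pi>\<in>G. \<alpha> \<pi> * \<rho> (g \<circ> \<pi>) $$ (k, i))))"
    unfolding hform_def
    by (simp add: sum_distrib_left sum_distrib_right mult_ac)
      (subst sum_swap_pairs, intro sum.cong refl, subst sum_swap_pairs, intro sum.cong refl sum.swap)
  also have "0 \<le> \<dots>"
    by (intro sum_nonneg hform_right_inverse_nonneg[OF psd_fun_rep_inv_form[OF G \<rho>] HK])
  finally show ?thesis by simp
qed

lemma character_positive_definite_comp:
  assumes G: "perm_subgroup m G" and \<rho>: "is_rep G n \<rho>" and \<chi>: "\<forall>\<sigma>\<in>G. \<chi> \<sigma> = mat_trace (\<rho> \<sigma>)"
  shows "0 \<le> (\<Sum>\<pi>\<in>G. \<Sum>\<sigma>\<in>G. \<chi> \<sigma> * (cnj (\<alpha> \<pi>) * \<alpha> (\<sigma> \<circ> \<pi>)))"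
proof -
  have "(\<Sum>\<sigma>\<in>G. \<chi> \<sigma> * (cnj (\<alpha> \<pi>) * \<alpha> (\<sigma> \<circ> \<pi>)))
      = (\<Sum>\<tau>\<in>G. cnj (\<alpha> \<pi>) * \<alpha> \<tau> * \<chi> (\<tau> \<circ> perm_inv \<pi>))" if \<pi>: "\<pi> \<in> G" for \<pi>
  proof -
    have "perm_inv \<pi> \<circ> \<pi> = id" by (rule permutes_inv_o(2)[OF perm_subgroup_permutes[OF G \<pi>]])
    then have "(\<Sum>\<sigma>\<in>G. \<chi> \<sigma> * (cnj (\<alpha> \<pi>) * \<alpha> (\<sigma> \<circ> \<pi>)))
        = (\<Sum>\<tau>\<in>G. \<chi> (\<tau> \<circ> perm_inv \<pi>) * (cnj (\<alpha> \<pi>) * \<alpha> (\<tau> \<circ> perm_inv \<pi> \<circ> \<pi>)))"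
      by (subst sum_perm_subgroup_comp_right[OF G perm_subgroup_inv[OF G \<pi>], symmetric]) simp
    also have "\<dots> = (\<Sum>\<tau>\<in>G. cnj (\<alpha> \<pi>) * \<alpha> \<tau> * \<chi> (\<tau> \<circ> perm_inv \<pi>))"
      using \<open>perm_inv \<pi> \<circ> \<pi> = id\<close> by (simp add: comp_assoc mult_ac)
    finally show ?thesis .
  qed
  then show ?thesis using character_positive_definite[OF G \<rho> \<chi>] by simp
qed

section \<open>Multilinear expansion of generalized matrix functions\<close>

lemma comp_permutes_in_PiE:
  assumes \<pi>: "\<pi> permutes {..<m}" and w: "w \<in> PiE {..<m} (\<lambda>_. X)"
  shows "w \<circ> \<pi> \<in> PiE {..<m} (\<lambda>_. X)"
  using w permutes_in_image[OF \<pi>] permutes_not_in[OF \<pi>]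
  by (auto simp: PiE_def Pi_def extensional_def)

lemma sum_PiE_comp_permutes:
  fixes \<pi> :: "nat \<Rightarrow> nat"
  assumes \<pi>: "\<pi> permutes {..<m}"
  shows "(\<Sum>w\<in>PiE {..<m} (\<lambda>_. X). f (w \<circ> \<pi>)) = (\<Sum>w\<in>PiE {..<m} (\<lambda>_. X). f w)"
  using permutes_inv_o[OF \<pi>]
  by (intro sum.reindex_bij_witness[where i = "\<lambda>w. w \<circ> perm_inv \<pi>" and j = "\<lambda>w. w \<circ> \<pi>"])
    (simp_all add: comp_assoc comp_permutes_in_PiE[OF \<pi>] comp_permutes_in_PiE[OF permutes_inv[OF \<pi>]])

lemma prod_comp_perm_inv:
  fixes \<pi> :: "nat \<Rightarrow> nat"
  assumes \<pi>: "\<pi> permutes {..<m}"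
  shows "(\<Prod>s<m. f (perm_inv \<pi> s) (r s)) = (\<Prod>t<m. f t (r (\<pi> t)))"
  using prod.permute[OF \<pi>, of "\<lambda>s. f (perm_inv \<pi> s) (r s)"] permutes_inverses(2)[OF \<pi>] by simp

lemma invariant_weighted_gen_mat_sum_nonneg:
  fixes A :: "nat \<Rightarrow> complex mat" and c :: "(nat \<Rightarrow> nat) \<Rightarrow> complex"
  assumes G: "perm_subgroup m G" and \<rho>: "is_rep G n \<rho>" and \<chi>: "\<forall>\<sigma>\<in>G. \<chi> \<sigma> = mat_trace (\<rho> \<sigma>)"
    and psd: "\<And>i. i \<in> I \<Longrightarrow> psd_mat m (A i)"
    and c_nonneg: "\<And>w. w \<in> PiE {..<m} (\<lambda>_. I) \<Longrightarrow> 0 \<le> c w"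
    and c_invariant: "\<And>\<pi> w. \<pi> \<in> G \<Longrightarrow> w \<in> PiE {..<m} (\<lambda>_. I) \<Longrightarrow> c (w \<circ> \<pi>) = c w"
  shows "0 \<le> (\<Sum>\<sigma>\<in>G. \<Sum>w\<in>PiE {..<m} (\<lambda>_. I). \<chi> \<sigma> * (c w * (\<Prod>t<m. A (w t) $$ (t, \<sigma> t))))"
proof -
  let ?W = "PiE {..<m} (\<lambda>_. I)" and ?K = "PiE {..<m} (\<lambda>_. {..<m})"
  have "\<forall>i\<in>I. \<exists>F. \<forall>a<m. \<forall>b<m. A i $$ (a, b) = (\<Sum>k<m. cnj (F k a) * F k b)"
    using psd_mat_gram[OF psd] by blast
  from bchoice[OF this] obtain F where F: "\<And>i a b. i \<in> I \<Longrightarrow> a < m \<Longrightarrow> b < m \<Longrightarrow> A i $$ (a, b) = (\<Sum>k<m. cnj (F i k a) * F i k b)"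
    by blast
  \<comment> \<open>the monomials into which the product of Gram entries expands\<close>
  define \<beta> where "\<beta> w \<kappa> r = (\<Prod>s<m. F (w s) (\<kappa> s) (r s))" for w \<kappa> and r :: "nat \<Rightarrow> nat"
  have expand: "(\<Prod>t<m. A (w t) $$ (t, \<sigma> t)) = (\<Sum>\<kappa>\<in>?K. cnj (\<beta> w \<kappa> id) * \<beta> w \<kappa> \<sigma>)"
    if w: "w \<in> ?W" and \<sigma>: "\<sigma> \<in> G" for w \<sigma>
  proof -
    have "(\<Prod>t<m. A (w t) $$ (t, \<sigma> t)) = (\<Prod>t<m. \<Sum>k<m. cnj (F (w t) k t) * F (w t) k (\<sigma> t))"
      using w permutes_in_image[OF perm_subgroup_permutes[OF G \<sigma>]] by (intro prod.cong refl F) auto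
    also have "\<dots> = (\<Sum>\<kappa>\<in>?K. \<Prod>t<m. cnj (F (w t) (\<kappa> t) t) * F (w t) (\<kappa> t) (\<sigma> t))"
      by (rule prod_sum_PiE) auto
    also have "\<dots> = (\<Sum>\<kappa>\<in>?K. cnj (\<beta> w \<kappa> id) * \<beta> w \<kappa> \<sigma>)"
      unfolding \<beta>_def by (simp add: prod.distrib)
    finally show ?thesis .
  qed
  have \<beta>_shift: "\<beta> (w \<circ> perm_inv \<pi>) (\<kappa> \<circ> perm_inv \<pi>) r = \<beta> w \<kappa> (r \<circ> \<pi>)" if "\<pi> \<in> G" for w \<kappa> r \<pi>
    unfolding \<beta>_def using prod_comp_perm_inv[OF perm_subgroup_permutes[OF G that]] by simp
  define S where "S = (\<Sum>\<sigma>\<in>G. \<Sum>w\<in>?W. \<chi> \<sigma> * (c w * (\<Prod>t<m. A (w t) $$ (t, \<sigma> t))))"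
  have S_id: "S = (\<Sum>w\<in>?W. \<Sum>\<kappa>\<in>?K. c w * (\<Sum>\<sigma>\<in>G. \<chi> \<sigma> * (cnj (\<beta> w \<kappa> id) * \<beta> w \<kappa> \<sigma>)))"
  proof -
    have "S = (\<Sum>\<sigma>\<in>G. \<Sum>w\<in>?W. \<Sum>\<kappa>\<in>?K. c w * (\<chi> \<sigma> * (cnj (\<beta> w \<kappa> id) * \<beta> w \<kappa> \<sigma>)))"
      unfolding S_def by (intro sum.cong refl) (simp add: expand sum_distrib_left mult_ac)
    also have "\<dots> = (\<Sum>w\<in>?W. \<Sum>\<kappa>\<in>?K. \<Sum>\<sigma>\<in>G. c w * (\<chi> \<sigma> * (cnj (\<beta> w \<kappa> id) * \<beta> w \<kappa> \<sigma>)))"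
      by (rule sum_rotate3)
    finally show ?thesis by (simp add: sum_distrib_left)
  qed
  \<comment> \<open>averaging over \<open>\<pi>\<close> makes each inner sum an instance of positive definiteness of \<open>\<chi>\<close>\<close>
  have S_comp: "S = (\<Sum>w\<in>?W. \<Sum>\<kappa>\<in>?K. c w * (\<Sum>\<sigma>\<in>G. \<chi> \<sigma> * (cnj (\<beta> w \<kappa> \<pi>) * \<beta> w \<kappa> (\<sigma> \<circ> \<pi>))))"
    if \<pi>: "\<pi> \<in> G" for \<pi>
  proof -
    have \<pi>': "perm_inv \<pi> permutes {..<m}" "perm_inv \<pi> \<in> G"
      using perm_subgroup_permutes[OF G] perm_subgroup_inv[OF G \<pi>] by auto
    show ?thesis unfolding S_id
      using \<pi>' c_invariant[OF \<pi>'(2)] \<beta>_shift[OF \<pi>]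
      by (subst (1 2) sum_PiE_comp_permutes[OF \<pi>'(1), symmetric]) simp
  qed
  have "of_nat (card G) * S = (\<Sum>\<pi>\<in>G. S)" by simp
  also have "\<dots> = (\<Sum>\<pi>\<in>G. \<Sum>w\<in>?W. \<Sum>\<kappa>\<in>?K. c w * (\<Sum>\<sigma>\<in>G. \<chi> \<sigma> * (cnj (\<beta> w \<kappa> \<pi>) * \<beta> w \<kappa> (\<sigma> \<circ> \<pi>))))"
    by (intro sum.cong refl S_comp)
  also have "\<dots> = (\<Sum>w\<in>?W. \<Sum>\<kappa>\<in>?K. c w * (\<Sum>\<pi>\<in>G. \<Sum>\<sigma>\<in>G. \<chi> \<sigma> * (cnj (\<beta> w \<kappa> \<pi>) * \<beta> w \<kappa> (\<sigma> \<circ> \<pi>))))"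
    unfolding sum_distrib_left by (rule sum_rotate3)
  also have "0 \<le> \<dots>"
    by (rule sum_nonneg)+
      (auto intro: mult_nonneg_nonneg[OF c_nonneg character_positive_definite_comp[OF G \<rho> \<chi>]])
  finally have "0 \<le> of_nat (card G) * S" .
  moreover have "card G > 0" using perm_subgroup_finite[OF G] perm_subgroup_id[OF G] card_gt_0_iff by blast
  ultimately have "0 \<le> S" by (simp add: less_eq_complex_def zero_le_mult_iff)
  then show ?thesis unfolding S_def .
qed

lemma gen_mat_fun_sum_expand:
  fixes A :: "nat \<Rightarrow> complex mat"
  assumes G: "perm_subgroup m G" and S: "S \<subseteq> I" "finite I"
    and M: "\<And>\<sigma> t. \<sigma> \<in> G \<Longrightarrow> t < m \<Longrightarrow> M $$ (t, \<sigma> t) = (\<Sum>i\<in>S. A i $$ (t, \<sigma> t))"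
  shows "gen_mat_fun m G \<chi> M
    = (\<Sum>\<sigma>\<in>G. \<Sum>w\<in>PiE {..<m} (\<lambda>_. I). \<chi> \<sigma> * (of_bool (w ` {..<m} \<subseteq> S) * (\<Prod>t<m. A (w t) $$ (t, \<sigma> t))))"
  unfolding gen_mat_fun_def
proof (intro sum.cong refl)
  fix \<sigma> assume \<sigma>: "\<sigma> \<in> G"
  let ?W = "PiE {..<m} (\<lambda>_. I)"
  have "(\<Prod>t<m. M $$ (t, \<sigma> t)) = (\<Prod>t<m. \<Sum>i\<in>S. A i $$ (t, \<sigma> t))"
    using M \<sigma> by (intro prod.cong refl) auto
  also have "\<dots> = (\<Sum>w\<in>PiE {..<m} (\<lambda>_. S). \<Prod>t<m. A (w t) $$ (t, \<sigma> t))"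
    using S finite_subset by (intro prod_sum_PiE) auto
  also have "PiE {..<m} (\<lambda>_. S) = ?W \<inter> {w. w ` {..<m} \<subseteq> S}"
    using S by (auto simp: PiE_def Pi_def)
  also have "(\<Sum>w\<in>?W \<inter> {w. w ` {..<m} \<subseteq> S}. \<Prod>t<m. A (w t) $$ (t, \<sigma> t))
      = (\<Sum>w\<in>?W. of_bool (w ` {..<m} \<subseteq> S) * (\<Prod>t<m. A (w t) $$ (t, \<sigma> t)))"
    using S(2) by (simp add: sum.inter_restrict finite_PiE)
  finally show "\<chi> \<sigma> * (\<Prod>t<m. M $$ (t, \<sigma> t))
      = (\<Sum>w\<in>?W. \<chi> \<sigma> * (of_bool (w ` {..<m} \<subseteq> S) * (\<Prod>t<m. A (w t) $$ (t, \<sigma> t))))"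
    by (simp add: sum_distrib_left)
qed

lemma of_bool_incl_excl3:
  fixes U :: "nat set"
  shows "of_bool (U \<subseteq> {0, 1, 2}) + of_bool (U \<subseteq> {0}) + of_bool (U \<subseteq> {1}) + of_bool (U \<subseteq> {2})
      - (of_bool (U \<subseteq> {0, 1}) + of_bool (U \<subseteq> {0, 2}) + of_bool (U \<subseteq> {1, 2}))
    = (of_bool (U = {} \<or> U = {0, 1, 2}) :: 'a :: ring_1)"
proof (cases "U \<in> Pow {0, 1, 2}")
  case True
  then show ?thesis by (simp add: Pow_insert) (elim disjE; simp)
next
  case False
  then show ?thesis by auto
qed

lemma gen_mat_fun_incl_excl3:
  assumes G: "perm_subgroup m G"
    and carrier: "A1 \<in> carrier_mat m m" "A2 \<in> carrier_mat m m" "A3 \<in> carrier_mat m m"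
  shows "gen_mat_fun m G \<chi> (A1 + A2 + A3) + gen_mat_fun m G \<chi> A1 + gen_mat_fun m G \<chi> A2
      + gen_mat_fun m G \<chi> A3
      - (gen_mat_fun m G \<chi> (A1 + A2) + gen_mat_fun m G \<chi> (A1 + A3) + gen_mat_fun m G \<chi> (A2 + A3))
    = (\<Sum>\<sigma>\<in>G. \<Sum>w\<in>PiE {..<m} (\<lambda>_. {0, 1, 2}). \<chi> \<sigma> *
        (of_bool (w ` {..<m} = {} \<or> w ` {..<m} = {0, 1, 2}) * (\<Prod>t<m. [A1, A2, A3] ! w t $$ (t, \<sigma> t))))"
proof -
  let ?W = "PiE {..<m} (\<lambda>_. {0, 1, 2 :: nat})" and ?A = "\<lambda>i. [A1, A2, A3] ! i"
  define X where "X S = (\<Sum>\<sigma>\<in>G. \<Sum>w\<in>?W. \<chi> \<sigma> * (of_bool (w ` {..<m} \<subseteq> S) * (\<Prod>t<m. ?A (w t) $$ (t, \<sigma> t))))"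
    for S
  have expand: "gen_mat_fun m G \<chi> M = X S"
    if "S \<subseteq> {0, 1, 2}" "\<And>\<sigma> t. \<sigma> \<in> G \<Longrightarrow> t < m \<Longrightarrow> M $$ (t, \<sigma> t) = (\<Sum>i\<in>S. ?A i $$ (t, \<sigma> t))"
    for S M
    unfolding X_def by (rule gen_mat_fun_sum_expand[OF G that(1)]) (simp_all add: that(2))
  have "\<sigma> t < m" if "\<sigma> \<in> G" "t < m" for \<sigma> t
    using permutes_in_image[OF perm_subgroup_permutes[OF G that(1)]] that(2) by simp
  then have "gen_mat_fun m G \<chi> (A1 + A2 + A3) = X {0, 1, 2}" "gen_mat_fun m G \<chi> A1 = X {0}"
    "gen_mat_fun m G \<chi> A2 = X {1}" "gen_mat_fun m G \<chi> A3 = X {2}"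
    "gen_mat_fun m G \<chi> (A1 + A2) = X {0, 1}" "gen_mat_fun m G \<chi> (A1 + A3) = X {0, 2}"
    "gen_mat_fun m G \<chi> (A2 + A3) = X {1, 2}"
    using carrier by (intro expand; simp)+
  moreover have "X {0, 1, 2} + X {0} + X {1} + X {2} - (X {0, 1} + X {0, 2} + X {1, 2})
    = (\<Sum>\<sigma>\<in>G. \<Sum>w\<in>?W. \<chi> \<sigma> * ((of_bool (w ` {..<m} \<subseteq> {0, 1, 2}) + of_bool (w ` {..<m} \<subseteq> {0})
        + of_bool (w ` {..<m} \<subseteq> {1}) + of_bool (w ` {..<m} \<subseteq> {2})
        - (of_bool (w ` {..<m} \<subseteq> {0, 1}) + of_bool (w ` {..<m} \<subseteq> {0, 2}) + of_bool (w ` {..<m} \<subseteq> {1, 2})))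
        * (\<Prod>t<m. ?A (w t) $$ (t, \<sigma> t))))"
    unfolding X_def by (simp only: ring_distribs sum.distrib sum_subtractf)
  ultimately show ?thesis by (simp only: of_bool_incl_excl3 cong: sum.cong)
qed

theorem theorem3p1:
  fixes m :: nat and G :: "(nat \<Rightarrow> nat) set" and \<chi> :: "(nat \<Rightarrow> nat) \<Rightarrow> complex"
    and A1 A2 A3 :: "complex mat"
  assumes "psd_mat m A1" "psd_mat m A2" "psd_mat m A3"
    and "perm_subgroup m G"
    and "irreducible_character G \<chi>"
  shows "0 \<le> gen_mat_fun m G \<chi> (A1 + A2 + A3) + gen_mat_fun m G \<chi> A1 + gen_mat_fun m G \<chi> A2
            + gen_mat_fun m G \<chi> A3
            - (gen_mat_fun m G \<chi> (A1 + A2) + gen_mat_fun m G \<chi> (A1 + A3) + gen_mat_fun m G \<chi> (A2 + A3))"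
proof -
  from assms(5) obtain n \<rho> where \<rho>: "is_rep G n \<rho>" and \<chi>: "\<forall>\<sigma>\<in>G. \<chi> \<sigma> = mat_trace (\<rho> \<sigma>)"
    unfolding irreducible_character_def irreducible_rep_def by blast
  have carrier: "A1 \<in> carrier_mat m m" "A2 \<in> carrier_mat m m" "A3 \<in> carrier_mat m m"
    using assms(1-3) unfolding psd_mat_def by blast+
  have psd: "psd_mat m ([A1, A2, A3] ! i)" if "i \<in> {0, 1, 2}" for i
    using assms(1-3) that by auto
  have image: "(\<lambda>t. w (\<pi> t)) ` {..<m} = w ` {..<m}" if "\<pi> \<in> G" for w \<pi>
    by (metis image_image permutes_image[OF perm_subgroup_permutes[OF assms(4) that]])
  show ?thesis
    unfolding gen_mat_fun_incl_excl3[OF assms(4) carrier]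
    by (rule invariant_weighted_gen_mat_sum_nonneg[OF assms(4) \<rho> \<chi> psd]) (simp_all add: image less_eq_complex_def)
qed

end
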